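(* The set of flat formulas of $\mathbf{PT}$ is closed under flat substitutions: if $\phi$ is a flat formula of $\mathbf{PT}$ and $\sigma$ is a flat substitution of $\mathbf{PT}$, then $\sigma(\phi)$ is flat.
   Context: Fix a countably infinite set Prop of propositional variables. A valuation is a function $v:\mathrm{Prop}\to\{0,1\}$; a team is a set of valuations. Formulas of $\mathbf{PT}$: $\phi::=p\mid\bot\mid\top\mid\,=\!(\phi_1,\dots,\phi_n,\phi)\mid\neg\phi\mid\phi\wedge\phi\mid\phi\otimes\phi\mid\phi\vee\phi\mid\phi\to\phi$. Satisfaction on a team $X$: $X\models p$ iff $v(p)=1$ for all $v\in X$; $X\models\bot$ iff $X=\emptyset$; $X\models\top$ always; $\wedge$ is conjunction of conditions; $X\models\phi\otimes\psi$ iff $X=Y\cup Z$ with $Y\models\phi$, $Z\models\psi$; $X\models\phi\vee\psi$ iff $X\models\phi$ or $X\models\psi$; $X\models\phi\to\psi$ iff every $Y\subseteq X$ with $Y\models\phi$ satisfies $\psi$; $X\models\neg\phi$ iff $\{v\}\not\models\phi$ for all $v\in X$; $X\models\,=\!(\phi_1,\dots,\phi_n,\psi)$ iff $X\models\bigwedge_i(\phi_i\vee(\phi_i\to\bot))\to(\psi\vee(\psi\to\bot))$. $\phi$ is flat if for all teams $X$: $X\models\phi$ iff $\{v\}\models\phi$ for all $v\in X$. A substitution is a map on formulas commuting with all connectives and atoms; it is flat if $\sigma(p)$ is flat for every $p\in\mathrm{Prop}$. *)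

theory Defs
  imports Main
begin

type_synonym valuation = "nat \<Rightarrow> bool"
type_synonym team = "valuation set"

datatype fml =
    Var nat
  | Bot
  | Top
  | Dep "fml list" fml
  | Neg fml
  | Conj fml fml
  | Tensor fml fml
  | Disj fml fml
  | Imp fml fml

text \<open>Team semantics. The dependence atom is given by the literal unfolding of
  X |= (AND_i (phi_i v (phi_i -> bot))) -> (psi v (psi -> bot)).\<close>
fun sat :: "team \<Rightarrow> fml \<Rightarrow> bool" where
  "sat X (Var p) = (\<forall>v\<in>X. v p)"
| "sat X Bot = (X = {})"
| "sat X Top = True"
| "sat X (Dep phis psi) =
     (\<forall>Y\<subseteq>X. (\<forall>phi\<in>set phis. sat Y phi \<or> (\<forall>Z\<subseteq>Y. sat Z phi \<longrightarrow> Z = {}))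
        \<longrightarrow> (sat Y psi \<or> (\<forall>Z\<subseteq>Y. sat Z psi \<longrightarrow> Z = {})))"
| "sat X (Neg phi) = (\<forall>v\<in>X. \<not> sat {v} phi)"
| "sat X (Conj phi psi) = (sat X phi \<and> sat X psi)"
| "sat X (Tensor phi psi) = (\<exists>Y Z. X = Y \<union> Z \<and> sat Y phi \<and> sat Z psi)"
| "sat X (Disj phi psi) = (sat X phi \<or> sat X psi)"
| "sat X (Imp phi psi) = (\<forall>Y\<subseteq>X. sat Y phi \<longrightarrow> sat Y psi)"

definition flat :: "fml \<Rightarrow> bool" where
  "flat phi \<longleftrightarrow> (\<forall>X. sat X phi \<longleftrightarrow> (\<forall>v\<in>X. sat {v} phi))"

fun subst :: "(nat \<Rightarrow> fml) \<Rightarrow> fml \<Rightarrow> fml" where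
  "subst s (Var p) = s p"
| "subst s Bot = Bot"
| "subst s Top = Top"
| "subst s (Dep phis psi) = Dep (map (subst s) phis) (subst s psi)"
| "subst s (Neg phi) = Neg (subst s phi)"
| "subst s (Conj phi psi) = Conj (subst s phi) (subst s psi)"
| "subst s (Tensor phi psi) = Tensor (subst s phi) (subst s psi)"
| "subst s (Disj phi psi) = Disj (subst s phi) (subst s psi)"
| "subst s (Imp phi psi) = Imp (subst s phi) (subst s psi)"

definition flat_subst :: "(nat \<Rightarrow> fml) \<Rightarrow> bool" where
  "flat_subst s \<longleftrightarrow> (\<forall>p. flat (s p))"

end

theory Submission
  imports Defs
begin

text \<open>A team satisfies \<open>subst s \<phi>\<close> exactly when its pointwise image under
  \<open>v \<mapsto> (\<lambda>p. {v} \<Turnstile> s p)\<close> satisfies \<open>\<phi>\<close>; this needs only that the substituted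
  formulas are flat. Every connective of PT either acts pointwise or quantifies
  over subteams, and the subteams of an image are exactly the images of subteams, so
  the transfer goes through by induction. Flatness of \<open>\<phi>\<close> then carries over to
  \<open>subst s \<phi>\<close>, since the image of a singleton is a singleton.\<close>

lemma all_subsets_image_iff:
  "(\<forall>Y\<subseteq>X. P (f ` Y)) \<longleftrightarrow> (\<forall>Y'\<subseteq>f ` X. P Y')"
  by (metis subset_image_iff image_mono)

lemma image_Int_vimage_eq:
  "Y' \<subseteq> f ` X \<Longrightarrow> f ` (X \<inter> f -` Y') = Y'"
  by blast

lemma sat_only_empty_image_iff:
  assumes "\<And>X. sat X \<phi>' \<longleftrightarrow> sat (f ` X) \<phi>"
  shows "(\<forall>Z\<subseteq>Y. sat Z \<phi>' \<longrightarrow> Z = {}) \<longleftrightarrow> (\<forall>Z\<subseteq>f ` Y. sat Z \<phi> \<longrightarrow> Z = {})"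
proof -
  have "(\<forall>Z\<subseteq>Y. sat Z \<phi>' \<longrightarrow> Z = {}) \<longleftrightarrow> (\<forall>Z\<subseteq>Y. sat (f ` Z) \<phi> \<longrightarrow> f ` Z = {})"
    by (simp only: assms image_is_empty)
  also have "\<dots> \<longleftrightarrow> (\<forall>Z\<subseteq>f ` Y. sat Z \<phi> \<longrightarrow> Z = {})"
    by (rule all_subsets_image_iff)
  finally show ?thesis .
qed

lemma sat_Tensor_image:
  assumes IH\<phi>: "\<And>X. sat X \<phi>' \<longleftrightarrow> sat (f ` X) \<phi>"
    and IH\<psi>: "\<And>X. sat X \<psi>' \<longleftrightarrow> sat (f ` X) \<psi>"
  shows "sat X (Tensor \<phi>' \<psi>') \<longleftrightarrow> sat (f ` X) (Tensor \<phi> \<psi>)"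
proof
  assume "sat X (Tensor \<phi>' \<psi>')"
  then obtain Y Z where "X = Y \<union> Z" "sat (f ` Y) \<phi>" "sat (f ` Z) \<psi>"
    by (auto simp: IH\<phi> IH\<psi>)
  then show "sat (f ` X) (Tensor \<phi> \<psi>)"
    by (auto simp: image_Un)
next
  assume "sat (f ` X) (Tensor \<phi> \<psi>)"
  then obtain Y' Z' where split: "f ` X = Y' \<union> Z'" and "sat Y' \<phi>" "sat Z' \<psi>"
    by auto
  let ?Y = "X \<inter> f -` Y'" and ?Z = "X \<inter> f -` Z'"
  have "f ` ?Y = Y'" "f ` ?Z = Z'"
    using split by (intro image_Int_vimage_eq; blast)+
  with \<open>sat Y' \<phi>\<close> \<open>sat Z' \<psi>\<close> have "sat ?Y \<phi>'" "sat ?Z \<psi>'"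
    by (simp_all add: IH\<phi> IH\<psi>)
  moreover have "X = ?Y \<union> ?Z"
    using split by auto
  ultimately show "sat X (Tensor \<phi>' \<psi>')"
    by auto
qed

lemma sat_subst_image:
  assumes atoms: "\<And>X p. sat X (s p) \<longleftrightarrow> (\<forall>v\<in>X. f v p)"
  shows "sat X (subst s \<phi>) \<longleftrightarrow> sat (f ` X) \<phi>"
proof (induction \<phi> arbitrary: X)
  case (Var p)
  show ?case by (simp add: atoms)
next
  case (Dep \<phi>s \<psi>)
  have "(\<forall>\<phi>\<in>set (map (subst s) \<phi>s). sat Y \<phi> \<or> (\<forall>Z\<subseteq>Y. sat Z \<phi> \<longrightarrow> Z = {}))
    \<longleftrightarrow> (\<forall>\<phi>\<in>set \<phi>s. sat (f ` Y) \<phi> \<or> (\<forall>Z\<subseteq>f ` Y. sat Z \<phi> \<longrightarrow> Z = {}))" for Y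
    using Dep.IH(1) sat_only_empty_image_iff[OF Dep.IH(1)] by simp
  moreover have "(sat Y (subst s \<psi>) \<or> (\<forall>Z\<subseteq>Y. sat Z (subst s \<psi>) \<longrightarrow> Z = {}))
    \<longleftrightarrow> (sat (f ` Y) \<psi> \<or> (\<forall>Z\<subseteq>f ` Y. sat Z \<psi> \<longrightarrow> Z = {}))" for Y
    using Dep.IH(2) sat_only_empty_image_iff[OF Dep.IH(2)] by simp
  ultimately have "sat X (subst s (Dep \<phi>s \<psi>)) \<longleftrightarrow>
    (\<forall>Y\<subseteq>X. (\<forall>\<phi>\<in>set \<phi>s. sat (f ` Y) \<phi> \<or> (\<forall>Z\<subseteq>f ` Y. sat Z \<phi> \<longrightarrow> Z = {}))
      \<longrightarrow> sat (f ` Y) \<psi> \<or> (\<forall>Z\<subseteq>f ` Y. sat Z \<psi> \<longrightarrow> Z = {}))"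
    by (simp only: subst.simps sat.simps)
  also have "\<dots> \<longleftrightarrow> sat (f ` X) (Dep \<phi>s \<psi>)"
    unfolding sat.simps by (rule all_subsets_image_iff)
  finally show ?case .
next
  case (Neg \<phi>)
  then show ?case
    by (simp only: subst.simps sat.simps image_insert image_empty) blast
next
  case (Tensor \<phi> \<psi>)
  then show ?case
    by (simp only: subst.simps sat_Tensor_image)
next
  case (Imp \<phi> \<psi>)
  then have "sat X (subst s (Imp \<phi> \<psi>)) \<longleftrightarrow> (\<forall>Y\<subseteq>X. sat (f ` Y) \<phi> \<longrightarrow> sat (f ` Y) \<psi>)"
    by (simp only: subst.simps sat.simps)
  also have "\<dots> \<longleftrightarrow> sat (f ` X) (Imp \<phi> \<psi>)"
    unfolding sat.simps by (rule all_subsets_image_iff)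
  finally show ?case .
qed (simp_all only: subst.simps sat.simps image_is_empty)

definition subst_valuation :: "(nat \<Rightarrow> fml) \<Rightarrow> valuation \<Rightarrow> valuation" where
  "subst_valuation s v = (\<lambda>p. sat {v} (s p))"

lemma sat_subst_flat:
  assumes "flat_subst s"
  shows "sat X (subst s \<phi>) \<longleftrightarrow> sat (subst_valuation s ` X) \<phi>"
proof (rule sat_subst_image)
  fix X p
  have "flat (s p)"
    using assms by (simp add: flat_subst_def)
  then show "sat X (s p) \<longleftrightarrow> (\<forall>v\<in>X. subst_valuation s v p)"
    \<comment> \<open>not \<open>simp add: flat_def\<close>: the unfolded fact rewrites \<open>sat {v} (s p)\<close> to itself forever\<close>
    unfolding flat_def subst_valuation_def by (rule spec)
qed

theorem lemma3p6:
  assumes "flat phi" and "flat_subst s"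
  shows "flat (subst s phi)"
  unfolding flat_def
proof
  fix X
  let ?f = "subst_valuation s"
  have "sat X (subst s phi) \<longleftrightarrow> sat (?f ` X) phi"
    using assms(2) by (rule sat_subst_flat)
  also have "\<dots> \<longleftrightarrow> (\<forall>w\<in>?f ` X. sat {w} phi)"
    using assms(1) unfolding flat_def by (rule spec)
  also have "\<dots> \<longleftrightarrow> (\<forall>v\<in>X. sat {?f v} phi)"
    by simp
  also have "\<dots> \<longleftrightarrow> (\<forall>v\<in>X. sat {v} (subst s phi))"
    using sat_subst_flat[OF assms(2), of "{_}"] by simp
  finally show "sat X (subst s phi) \<longleftrightarrow> (\<forall>v\<in>X. sat {v} (subst s phi))" .
qed

end
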